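(* Let $\mathcal U,\mathbf f$ be as in the context, $0<\varepsilon\le 1$ and $B\subset\mathcal U$ a ball. Then for all sufficiently large $t>0$, $$N\big(B\setminus\mathfrak M(\varepsilon,t);\varepsilon,t\big)\le 2(\varepsilon e^{-t})^{-d/2}\mathcal L_d(B)\sup_{\mathbf x_0\in\mathfrak M'(\varepsilon,t)\cap B}N\big(\Delta_t(\mathbf x_0)\cap B;\varepsilon,t\big).$$
   Context: Setup: $\mathcal U\subset\mathbb R^d$ open, $\mathbf f:\mathcal U\to\mathbb R^n$ a $C^2$ map $\mathbf f(\mathbf x)=(x_1,\dots,x_d,f_1(\mathbf x),\dots,f_m(\mathbf x))$ with first and second partials of the $f_k$ bounded by $M\ge1$. $N(\Delta;\varepsilon,t)$ is the number of $(\mathbf p,q)\in\mathbb Z^n\times\mathbb Z$ with $0<q<e^t$ and $\inf_{\mathbf x\in\Delta\cap\mathcal U}\|\mathbf f(\mathbf x)-\mathbf p/q\|_\infty<\varepsilon e^{-t}$. $\Delta_t(\mathbf x_0)=\{\mathbf x\in\mathbb R^d:\|\mathbf x-\mathbf x_0\|_\infty\le(\varepsilon e^{-t})^{1/2}\}$. With $\sigma_k$ the $k\times k$ antidiagonal permutation matrix, $U(\mathbf y)=\begin{bmatrix}I_n&\sigma_n\mathbf y^T\\0&1\end{bmatrix}$, $Z(\Theta)=\begin{bmatrix}I_m&\sigma_m\Theta\sigma_d&0\\0&I_d&0\\0&0&1\end{bmatrix}$, $J(\mathbf x)=[\partial f_i/\partial x_j(\mathbf x)]$, $\mathbf u(\mathbf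 x)=Z(-J(\mathbf x))U(\mathbf f(\mathbf x))$, $\phi=(\varepsilon^ne^t)^{1/(n+1)}$, $g_t=\mathrm{diag}(\phi\varepsilon^{-1},\dots,\phi\varepsilon^{-1},\phi e^{-t})$, $b_t=\mathrm{diag}\big(e^{\frac{dt}{2(n+1)}}I_m,e^{-\frac{(m+1)t}{2(n+1)}}I_d,e^{\frac{dt}{2(n+1)}}\big)$ and $\lambda_{n+1}$ the last successive minimum of the Euclidean unit ball: $\mathfrak M_0(\varepsilon,t)=\{\mathbf x\in\mathcal U:\lambda_{n+1}(b_tg_t\mathbf u(\mathbf x)\mathbb Z^{n+1})>\phi e^{\frac{dt}{2(n+1)}}\}$, $\mathfrak M(\varepsilon,t)=\bigcup_{\mathbf x\in\mathfrak M_0(\varepsilon,t)}B(\mathbf x,\varepsilon e^{-t/2})\cap\mathcal U$, and $\mathfrak M'(\varepsilon,t)=\mathcal U\setminus\mathfrak M(\varepsilon,t)$. *)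

theory Defs
  imports "HOL-Analysis.Analysis"
begin

text \<open>Coordinates of R^n are labelled by the type 'm + 'd:
  Inl k stands for the coordinate f_k, Inr j for the coordinate x_j.
  Coordinates of R^(n+1) are labelled by ('m + 'd) option, None being the last one.\<close>

definition partial :: "(real^'d \<Rightarrow> real) \<Rightarrow> 'd \<Rightarrow> real^'d \<Rightarrow> real" where
  "partial g j x = frechet_derivative g (at x) (axis j 1)"

definition fvec :: "('m \<Rightarrow> real^'d \<Rightarrow> real) \<Rightarrow> real^'d \<Rightarrow> ('m + 'd \<Rightarrow> real)" where
  "fvec f x = (\<lambda>i. case i of Inl k \<Rightarrow> f k x | Inr j \<Rightarrow> x $ j)"

text \<open>N(Delta; eps, t); the infimum condition inf_{x in Delta cap U} |F(x) - p/q|_infty < eps e^-t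
  is written out as the existence of such an x.\<close>
definition Ncount :: "(real^'d) set \<Rightarrow> ('m::finite \<Rightarrow> real^'d \<Rightarrow> real) \<Rightarrow> (real^'d) set
     \<Rightarrow> real \<Rightarrow> real \<Rightarrow> nat" where
  "Ncount U f \<Delta> \<epsilon> t = card {(p :: 'm + 'd \<Rightarrow> int, q :: int).
       0 < q \<and> real_of_int q < exp t \<and>
       (\<exists>x\<in>\<Delta> \<inter> U. (\<forall>i. \<bar>fvec f x i - real_of_int (p i) / real_of_int q\<bar> < \<epsilon> * exp (- t)))}"

definition Delta_t :: "real \<Rightarrow> real \<Rightarrow> real^'d \<Rightarrow> (real^'d) set" where
  "Delta_t \<epsilon> t x0 = {x. \<forall>j. \<bar>x $ j - x0 $ j\<bar> \<le> (\<epsilon> * exp (- t)) powr (1/2)}"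

text \<open>U(y) = [[I_n, sigma_n y^T],[0,1]] with coordinates relabelled as above.\<close>
definition Umat :: "('m::finite + 'd::finite \<Rightarrow> real) \<Rightarrow> real^('m + 'd) option^('m + 'd) option" where
  "Umat y = (\<chi> i l. if i = l then 1 else
      (case (i, l) of (Some a, None) \<Rightarrow> y a | _ \<Rightarrow> 0))"

text \<open>Z(Theta) = [[I_m, sigma_m Theta sigma_d, 0],[0, I_d, 0],[0,0,1]] with coordinates relabelled.\<close>
definition Zmat :: "('m::finite \<Rightarrow> 'd::finite \<Rightarrow> real) \<Rightarrow> real^('m + 'd) option^('m + 'd) option" where
  "Zmat \<Theta> = (\<chi> i l. if i = l then 1 else
      (case (i, l) of (Some (Inl k), Some (Inr j)) \<Rightarrow> \<Theta> k j | _ \<Rightarrow> 0))"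

definition umat :: "('m::finite \<Rightarrow> real^'d \<Rightarrow> real) \<Rightarrow> real^'d \<Rightarrow> real^('m + 'd) option^('m + 'd) option" where
  "umat f x = Zmat (\<lambda>k j. - partial (f k) j x) ** Umat (fvec f x)"

definition phi :: "nat \<Rightarrow> real \<Rightarrow> real \<Rightarrow> real" where
  "phi n \<epsilon> t = (\<epsilon> ^ n * exp t) powr (1 / real (n + 1))"

definition gmat :: "real \<Rightarrow> real \<Rightarrow> real^('m::finite + 'd::finite) option^('m + 'd) option" where
  "gmat \<epsilon> t = (let n = CARD('m) + CARD('d) in
     (\<chi> i l. if i = l then (if i = None then phi n \<epsilon> t * exp (- t) else phi n \<epsilon> t / \<epsilon>) else 0))"

definition bmat :: "real \<Rightarrow> real^('m::finite + 'd::finite) option^('m + 'd) option" where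
  "bmat t = (let n = CARD('m) + CARD('d); d = CARD('d); m = CARD('m) in
     (\<chi> i l. if i = l then
        (case i of Some (Inr _) \<Rightarrow> exp (- (real m + 1) * t / (2 * (real n + 1)))
                 | _ \<Rightarrow> exp (real d * t / (2 * (real n + 1))))
      else 0))"

definition lattice_of :: "real^'k^'k \<Rightarrow> (real^'k) set" where
  "lattice_of A = range (\<lambda>z::'k \<Rightarrow> int. A *v (\<chi> i. real_of_int (z i)))"

definition succ_min :: "nat \<Rightarrow> (real^'k) set \<Rightarrow> real" where
  "succ_min k \<Lambda> = Inf {r. r > 0 \<and>
      (\<exists>S. S \<subseteq> \<Lambda> \<inter> cball 0 r \<and> finite S \<and> card S = k \<and> independent S)}"

definition M0set :: "(real^'d) set \<Rightarrow> ('m::finite \<Rightarrow> real^'d::finite \<Rightarrow> real) \<Rightarrow> real \<Rightarrow> real \<Rightarrow> (real^'d) set" where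
  "M0set U f \<epsilon> t = {x \<in> U.
     succ_min (CARD('m) + CARD('d) + 1)
       (lattice_of (bmat t ** gmat \<epsilon> t ** umat f x))
     > phi (CARD('m) + CARD('d)) \<epsilon> t * exp (real CARD('d) * t / (2 * (real (CARD('m) + CARD('d)) + 1)))}"

definition Mset :: "(real^'d) set \<Rightarrow> ('m::finite \<Rightarrow> real^'d::finite \<Rightarrow> real) \<Rightarrow> real \<Rightarrow> real \<Rightarrow> (real^'d) set" where
  "Mset U f \<epsilon> t = (\<Union>x\<in>M0set U f \<epsilon> t. ball x (\<epsilon> * exp (- t / 2))) \<inter> U"

definition Mset' :: "(real^'d) set \<Rightarrow> ('m::finite \<Rightarrow> real^'d::finite \<Rightarrow> real) \<Rightarrow> real \<Rightarrow> real \<Rightarrow> (real^'d) set" where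
  "Mset' U f \<epsilon> t = U - Mset U f \<epsilon> t"

end

theory Submission
  imports Defs
begin

text \<open>Tile R^d by the grid of cubes of side s = (\<epsilon> e^-t)^(1/2). Two points of one cube
  are within s of each other in every coordinate, so each point of B - \<MM> lies in
  \<Delta>_t(x0) for a fixed representative x0 \<in> \<MM>' \<inter> B of its cube. As N(\<Delta>; \<epsilon>, t) is
  subadditive in \<Delta>, the count is at most the number of cubes met times the supremum.
  Those cubes are disjoint and lie in the ball of radius r + d s about the centre of B, so
  there are at most vol B(r + d s) / s^d < 2 L_d(B) / s^d of them once t is large.
  The counts are finite because f, having bounded derivatives, is bounded on B.\<close>

lemma onorm_frechet_derivative_le_partial_bound:
  fixes g :: "real^'d \<Rightarrow> real"
  assumes "g differentiable (at x)" and "\<And>j. \<bar>partial g j x\<bar> \<le> M"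
  shows "onorm (frechet_derivative g (at x)) \<le> M * CARD('d)"
proof (rule onorm_le)
  fix h :: "real^'d"
  let ?D = "frechet_derivative g (at x)"
  have "linear ?D"
    using assms(1) frechet_derivative_works has_derivative_linear by blast
  then have "?D h = ?D (\<Sum>j\<in>UNIV. h $ j *s axis j 1)"
    by (simp only: basis_expansion)
  also have "\<dots> = (\<Sum>j\<in>UNIV. h $ j * partial g j x)"
    using \<open>linear ?D\<close> by (simp add: linear_sum linear_scale partial_def scalar_mult_eq_scaleR)
  finally have "norm (?D h) \<le> (\<Sum>j\<in>UNIV. \<bar>h $ j\<bar> * \<bar>partial g j x\<bar>)"
    using sum_abs[of "\<lambda>j. h $ j * partial g j x" UNIV] by (simp add: abs_mult)
  also have "\<dots> \<le> (\<Sum>j\<in>(UNIV::'d set). norm h * M)"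
    by (intro sum_mono mult_mono component_le_norm_cart assms(2)) auto
  finally show "norm (?D h) \<le> M * CARD('d) * norm h"
    by (simp add: mult_ac)
qed

lemma abs_diff_le_of_partial_bound:
  fixes g :: "real^'d \<Rightarrow> real"
  assumes "convex S" and "\<And>y. y \<in> S \<Longrightarrow> g differentiable (at y)"
    and "\<And>j y. y \<in> S \<Longrightarrow> \<bar>partial g j y\<bar> \<le> M" and "x \<in> S" "y \<in> S"
  shows "\<bar>g x - g y\<bar> \<le> M * CARD('d) * norm (x - y)"
proof -
  have "norm (g x - g y) \<le> M * CARD('d) * norm (x - y)"
  proof (rule differentiable_bound[OF assms(1) _ _ assms(4,5)])
    fix z assume "z \<in> S"
    then show "(g has_derivative frechet_derivative g (at z)) (at z within S)"
      using assms(2) frechet_derivative_works has_derivative_at_withinI by blast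
    show "onorm (frechet_derivative g (at z)) \<le> M * CARD('d)"
      using \<open>z \<in> S\<close> assms(2,3) by (intro onorm_frechet_derivative_le_partial_bound) auto
  qed
  then show ?thesis by simp
qed

lemma fvec_component_bounded_on_ball:
  fixes f :: "'m \<Rightarrow> real^'d \<Rightarrow> real"
  assumes f_diff: "\<And>k x. x \<in> ball c r \<Longrightarrow> f k differentiable (at x)"
    and df_bound: "\<And>k j x. x \<in> ball c r \<Longrightarrow> \<bar>partial (f k) j x\<bar> \<le> M"
  shows "\<exists>B. \<forall>x\<in>ball c r. \<bar>fvec f x i\<bar> \<le> B"
proof (cases i)
  case (Inl k)
  have "\<bar>f k x\<bar> \<le> \<bar>f k c\<bar> + M * CARD('d) * r" if x: "x \<in> ball c r" for x
  proof -
    have c: "c \<in> ball c r"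
      using x le_less_trans[OF zero_le_dist] by simp
    then have "0 \<le> M"
      using df_bound[of c k undefined] by linarith
    have "\<bar>f k x - f k c\<bar> \<le> M * CARD('d) * norm (x - c)"
      using f_diff df_bound x c by (intro abs_diff_le_of_partial_bound[OF convex_ball])
    also have "\<dots> \<le> M * CARD('d) * r"
      using x \<open>0 \<le> M\<close> by (intro mult_left_mono) (auto simp: dist_norm norm_minus_commute)
    finally show ?thesis by linarith
  qed
  then show ?thesis
    using Inl unfolding fvec_def by (intro exI[of _ "\<bar>f k c\<bar> + M * CARD('d) * r"]) simp
next
  case (Inr j)
  have "\<bar>x $ j\<bar> \<le> norm c + r" if "x \<in> ball c r" for x
    using component_le_norm_cart[of x j] norm_triangle_sub[of x c] that
    by (simp add: dist_norm norm_minus_commute)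
  then show ?thesis
    using Inr unfolding fvec_def by (intro exI[of _ "norm c + r"]) simp
qed

definition approximants ::
    "('a \<Rightarrow> 'i \<Rightarrow> real) \<Rightarrow> 'a set \<Rightarrow> real \<Rightarrow> real \<Rightarrow> (('i \<Rightarrow> int) \<times> int) set" where
  "approximants F A Q e = {(p, q). 0 < q \<and> real_of_int q < Q \<and>
     (\<exists>x\<in>A. \<forall>i. \<bar>F x i - real_of_int (p i) / real_of_int q\<bar> < e)}"

lemma Ncount_eq_card_approximants:
  "Ncount U f \<Delta> \<epsilon> t = card (approximants (fvec f) (\<Delta> \<inter> U) (exp t) (\<epsilon> * exp (- t)))"
  unfolding Ncount_def approximants_def ..

lemma approximants_mono: "A \<subseteq> A' \<Longrightarrow> approximants F A Q e \<subseteq> approximants F A' Q e"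
  unfolding approximants_def by blast

lemma approximants_UN:
  "approximants F (\<Union>k\<in>K. A k) Q e = (\<Union>k\<in>K. approximants F (A k) Q e)"
  unfolding approximants_def by blast

lemma finite_approximants:
  fixes F :: "'a \<Rightarrow> 'i::finite \<Rightarrow> real"
  assumes "\<And>i. \<exists>B. \<forall>x\<in>A. \<bar>F x i\<bar> \<le> B"
  shows "finite (approximants F A Q e)"
proof -
  obtain B where B: "\<And>i x. x \<in> A \<Longrightarrow> \<bar>F x i\<bar> \<le> B i"
    using assms by metis
  define N where "N i = \<lceil>(\<bar>B i\<bar> + \<bar>e\<bar>) * Q\<rceil>" for i
  have "approximants F A Q e \<subseteq> Pi\<^sub>E UNIV (\<lambda>i. {-N i..N i}) \<times> {0..\<lceil>Q\<rceil>}"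
    unfolding approximants_def
  proof clarify
    fix p q x
    assume q: "0 < q" "real_of_int q < Q" and "x \<in> A"
      and close: "\<forall>i. \<bar>F x i - real_of_int (p i) / real_of_int q\<bar> < e"
    have p_bound: "\<bar>p i\<bar> \<le> N i" for i
    proof -
      have q_pos: "0 < real_of_int q"
        using q by simp
      have "\<bar>real_of_int (p i) / q\<bar> \<le> \<bar>B i\<bar> + \<bar>e\<bar>"
        using B[OF \<open>x \<in> A\<close>, of i] close[rule_format, of i] by linarith
      then have "\<bar>real_of_int (p i)\<bar> \<le> (\<bar>B i\<bar> + \<bar>e\<bar>) * q"
        by (simp only: abs_div_pos[OF q_pos, symmetric] pos_divide_le_eq[OF q_pos])
      also have "\<dots> \<le> (\<bar>B i\<bar> + \<bar>e\<bar>) * Q"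
        using q by (intro mult_left_mono) auto
      also have "\<dots> \<le> real_of_int (N i)"
        unfolding N_def by (rule le_of_int_ceiling)
      finally show ?thesis
        by (metis of_int_abs of_int_le_iff)
    qed
    have "p i \<in> {-N i..N i}" for i
      using p_bound[of i] by (simp add: abs_le_iff)
    then have "p \<in> Pi\<^sub>E UNIV (\<lambda>i. {-N i..N i})"
      by (simp add: PiE_iff)
    moreover have "q \<in> {0..\<lceil>Q\<rceil>}"
      using q by (simp add: le_ceiling_iff)
    ultimately show "p \<in> Pi\<^sub>E UNIV (\<lambda>i. {-N i..N i}) \<and> q \<in> {0..\<lceil>Q\<rceil>}" ..
  qed
  then show ?thesis
    by (rule finite_subset) (intro finite_cartesian_product finite_PiE finite_atLeastAtMost_int finite)
qed

definition grid_index :: "real \<Rightarrow> real^'d \<Rightarrow> 'd \<Rightarrow> int" where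
  "grid_index s x = (\<lambda>j. \<lfloor>x $ j / s\<rfloor>)"

definition grid_cell :: "real \<Rightarrow> ('d::finite \<Rightarrow> int) \<Rightarrow> (real^'d) set" where
  "grid_cell s k = box (\<chi> j. s * k j) (\<chi> j. s * (k j + 1))"

lemma abs_diff_lt_if_grid_index_eq:
  fixes s :: real
  assumes "0 < s" and "grid_index s x = grid_index s y"
  shows "\<bar>x $ j - y $ j\<bar> < s"
proof -
  have "\<lfloor>x $ j / s\<rfloor> = \<lfloor>y $ j / s\<rfloor>"
    using assms(2) unfolding grid_index_def by meson
  moreover obtain k :: real where k: "k = real_of_int \<lfloor>y $ j / s\<rfloor>"
    by blast
  ultimately have "k \<le> x $ j / s" "x $ j / s < k + 1"
    by (simp_all only: floor_eq_iff)
  moreover have "k \<le> y $ j / s" "y $ j / s < k + 1"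
    unfolding k by (rule of_int_floor_le, rule real_of_int_floor_add_one_gt)
  ultimately have "\<bar>x $ j / s - y $ j / s\<bar> < 1"
    by linarith
  then show ?thesis
    using assms(1) by (simp add: abs_divide pos_divide_less_eq flip: diff_divide_distrib)
qed

lemma grid_index_eq_if_mem_grid_cell:
  fixes s :: real
  assumes "0 < s" and "y \<in> grid_cell s k"
  shows "grid_index s y = k"
proof
  fix j
  have "s * k j < y $ j" "y $ j < s * (k j + 1)"
    using assms(2) by (auto simp: grid_cell_def mem_box_cart)
  then have "k j < y $ j / s" "y $ j / s < real_of_int (k j) + 1"
    using assms(1) by (simp_all add: field_simps)
  then show "grid_index s y j = k j"
    unfolding grid_index_def floor_eq_iff by (blast intro: less_imp_le)
qed

lemma measure_grid_cell:
  fixes s :: real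
  assumes "0 < s"
  shows "measure lborel (grid_cell s (k::'d::finite \<Rightarrow> int)) = s ^ CARD('d)"
proof -
  have side: "((\<chi> j. s * (k j + 1)) - (\<chi> j. s * k j)) \<bullet> b = s" if "b \<in> Basis" for b :: "real^'d"
    using that by (auto simp: Basis_vec_def inner_axis algebra_simps)
  have "(\<chi> j. s * k j) \<bullet> b \<le> (\<chi> j. s * (k j + 1)) \<bullet> b" if "b \<in> Basis" for b :: "real^'d"
    using side[OF that] assms by (simp add: inner_diff_left)
  then have "measure lborel (grid_cell s k) = (\<Prod>b\<in>(Basis::(real^'d) set). s)"
    unfolding grid_cell_def using side by (subst measure_lborel_box_eq) auto
  then show ?thesis by simp
qed

lemma grid_cell_subset_cball:
  fixes x :: "real^'d::finite" and s :: real
  assumes "0 < s"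
  shows "grid_cell s (grid_index s x) \<subseteq> cball x (CARD('d) * s)"
proof
  fix y :: "real^'d"
  assume "y \<in> grid_cell s (grid_index s x)"
  then have "grid_index s x = grid_index s y"
    using grid_index_eq_if_mem_grid_cell[OF assms] by metis
  then have "\<bar>(x - y) $ j\<bar> \<le> s" for j
    using abs_diff_lt_if_grid_index_eq[OF assms, of x y j] by simp
  then have "norm (x - y) \<le> (\<Sum>j\<in>(UNIV::'d set). s)"
    by (intro order_trans[OF norm_le_l1_cart sum_mono])
  then show "y \<in> cball x (CARD('d) * s)"
    by (simp add: dist_norm)
qed

lemma measure_UN_grid_cell:
  fixes s :: real
  assumes "0 < s" and "finite G"
  shows "measure lborel (\<Union>k\<in>G. grid_cell s (k::'d::finite \<Rightarrow> int)) = real (card G) * s ^ CARD('d)"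
proof -
  have "measure lborel (\<Union>k\<in>G. grid_cell s k) = (\<Sum>k\<in>G. measure lborel (grid_cell s k))"
    using assms grid_index_eq_if_mem_grid_cell[OF assms(1)]
    by (intro measure_UNION') (auto simp: grid_cell_def pairwise_def disjnt_def)
  then show ?thesis
    by (simp add: measure_grid_cell[OF assms(1)])
qed

lemma UN_grid_cell_subset_cball:
  fixes L :: "(real^'d::finite) set" and s :: real
  assumes "0 < s" and "L \<subseteq> cball c r"
  shows "(\<Union>k\<in>grid_index s ` L. grid_cell s k) \<subseteq> cball c (r + CARD('d) * s)"
proof -
  have "grid_cell s (grid_index s x) \<subseteq> cball c (r + CARD('d) * s)" if "x \<in> L" for x
  proof -
    have "cball x (CARD('d) * s) \<subseteq> cball c (r + CARD('d) * s)"
      using assms(2) that by (auto simp: cball_subset_cball_iff dist_commute)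
    then show ?thesis
      using grid_cell_subset_cball[OF assms(1), of x] by blast
  qed
  then show ?thesis
    by blast
qed

lemma card_grid_index_image_le:
  fixes L :: "(real^'d::finite) set" and s r :: real
  assumes "0 < s" and "0 \<le> r" and "L \<subseteq> cball c r"
  shows "finite (grid_index s ` L)"
    and "real (card (grid_index s ` L)) * s ^ CARD('d)
           \<le> unit_ball_vol CARD('d) * (r + CARD('d) * s) ^ CARD('d)"
proof -
  let ?R = "r + CARD('d) * s"
  let ?V = "unit_ball_vol CARD('d) * ?R ^ CARD('d)"
  have packing: "real (card G) * s ^ CARD('d) \<le> ?V"
    if "G \<subseteq> grid_index s ` L" "finite G" for G
  proof -
    have "(\<Union>k\<in>G. grid_cell s k) \<subseteq> cball c ?R"
      using UN_grid_cell_subset_cball[OF assms(1,3)] that(1) by blast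
    then have "measure lborel (\<Union>k\<in>G. grid_cell s k) \<le> measure lborel (cball c ?R)"
      by (intro measure_mono_fmeasurable) (auto simp: grid_cell_def intro: fmeasurable_compact)
    then have "real (card G) * s ^ CARD('d) \<le> measure lborel (cball c ?R)"
      by (simp only: measure_UN_grid_cell[OF assms(1) \<open>finite G\<close>])
    also have "\<dots> = ?V"
      using assms(1,2) by (simp add: content_cball)
    finally show ?thesis .
  qed
  have "finite (grid_index s ` L) \<and> card (grid_index s ` L) \<le> nat \<lfloor>?V / s ^ CARD('d)\<rfloor>"
  proof (rule finite_if_finite_subsets_card_bdd)
    fix G assume "G \<subseteq> grid_index s ` L" "finite G"
    then have "real (card G) \<le> ?V / s ^ CARD('d)"
      using packing assms(1) by (simp add: le_divide_eq)
    then show "card G \<le> nat \<lfloor>?V / s ^ CARD('d)\<rfloor>"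
      by (rule le_nat_floor)
  qed
  then show "finite (grid_index s ` L)" ..
  then show "real (card (grid_index s ` L)) * s ^ CARD('d) \<le> ?V"
    by (rule packing[OF order_refl])
qed

lemma Ncount_mono:
  assumes bounded: "\<And>i. \<exists>B. \<forall>x\<in>S. \<bar>fvec f x i\<bar> \<le> B"
    and "A \<subseteq> A'" and "A' \<subseteq> S"
  shows "Ncount U f A \<epsilon> t \<le> Ncount U f A' \<epsilon> t"
proof -
  have "\<exists>B. \<forall>x\<in>A' \<inter> U. \<bar>fvec f x i\<bar> \<le> B" for i
    using bounded[of i] assms(3) by blast
  then show ?thesis
    unfolding Ncount_eq_card_approximants
    using assms(2) by (intro card_mono finite_approximants approximants_mono) auto
qed

lemma Ncount_UN_le:
  assumes bounded: "\<And>i. \<exists>B. \<forall>x\<in>S. \<bar>fvec f x i\<bar> \<le> B"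
    and "finite K" and "\<And>k. k \<in> K \<Longrightarrow> A k \<subseteq> S" and "L \<subseteq> (\<Union>k\<in>K. A k)"
  shows "Ncount U f L \<epsilon> t \<le> (\<Sum>k\<in>K. Ncount U f (A k) \<epsilon> t)"
proof -
  let ?N = "\<lambda>A. approximants (fvec f) (A \<inter> U) (exp t) (\<epsilon> * exp (- t))"
  have finite_N: "finite (?N (A k))" if "k \<in> K" for k
    using bounded assms(3)[OF that] by (intro finite_approximants) (meson IntD1 subsetD)
  have "?N L \<subseteq> ?N (\<Union>k\<in>K. A k)"
    using assms(4) by (intro approximants_mono Int_mono) auto
  also have "\<dots> = (\<Union>k\<in>K. ?N (A k))"
    by (simp only: UN_extend_simps(4) approximants_UN)
  finally have "card (?N L) \<le> card (\<Union>k\<in>K. ?N (A k))"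
    using assms(2) finite_N by (intro card_mono finite_UN_I) auto
  also have "\<dots> \<le> (\<Sum>k\<in>K. card (?N (A k)))"
    using assms(2) by (rule card_UN_le)
  finally show ?thesis
    by (simp only: Ncount_eq_card_approximants)
qed

lemma subset_UN_Delta_t_grid_representative:
  fixes s :: real
  assumes "0 < s" and "s \<le> (\<epsilon> * exp (- t)) powr (1/2)"
  shows "L \<subseteq> (\<Union>k\<in>grid_index s ` L. Delta_t \<epsilon> t (inv_into L (grid_index s) k))"
proof
  fix x assume "x \<in> L"
  let ?x0 = "inv_into L (grid_index s) (grid_index s x)"
  have "grid_index s ?x0 = grid_index s x"
    using \<open>x \<in> L\<close> by (simp add: f_inv_into_f)
  then have "\<bar>x $ j - ?x0 $ j\<bar> < s" for j
    using abs_diff_lt_if_grid_index_eq[OF assms(1)] by metis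
  then have "x \<in> Delta_t \<epsilon> t ?x0"
    unfolding Delta_t_def mem_Collect_eq using assms(2) by (meson less_imp_le order_trans)
  then show "x \<in> (\<Union>k\<in>grid_index s ` L. Delta_t \<epsilon> t (inv_into L (grid_index s) k))"
    using \<open>x \<in> L\<close> by blast
qed

lemma Ncount_le_card_grid_index_mult_SUP:
  fixes f :: "'m::finite \<Rightarrow> real^'d::finite \<Rightarrow> real" and s :: real
  assumes bounded: "\<And>i. \<exists>B. \<forall>x\<in>ball c r. \<bar>fvec f x i\<bar> \<le> B"
    and s: "0 < s" "s \<le> (\<epsilon> * exp (- t)) powr (1/2)"
    and L: "L \<subseteq> X \<inter> ball c r" and finite_K: "finite (grid_index s ` L)"
  shows "real (Ncount U f L \<epsilon> t)
    \<le> real (card (grid_index s ` L))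
        * real (SUP x0 \<in> X \<inter> ball c r. Ncount U f (Delta_t \<epsilon> t x0 \<inter> ball c r) \<epsilon> t)"
proof -
  let ?D = "\<lambda>x0. Delta_t \<epsilon> t x0 \<inter> ball c r"
  let ?sup = "SUP x0 \<in> X \<inter> ball c r. Ncount U f (?D x0) \<epsilon> t"
  define K where "K = grid_index s ` L"
  define rep where "rep = inv_into L (grid_index s)"
  have rep: "rep k \<in> X \<inter> ball c r" if "k \<in> K" for k
    using L inv_into_into[of k "grid_index s" L] that unfolding K_def rep_def by blast
  have "Ncount U f (?D x0) \<epsilon> t \<le> Ncount U f (ball c r) \<epsilon> t" for x0
    by (rule Ncount_mono[OF bounded]) auto
  then have bdd: "bdd_above ((\<lambda>x0. Ncount U f (?D x0) \<epsilon> t) ` (X \<inter> ball c r))"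
    by (meson bdd_aboveI2)
  have "L \<subseteq> (\<Union>k\<in>K. ?D (rep k))"
    using subset_UN_Delta_t_grid_representative[OF s, of L] L unfolding K_def rep_def by blast
  then have "Ncount U f L \<epsilon> t \<le> (\<Sum>k\<in>K. Ncount U f (?D (rep k)) \<epsilon> t)"
    using finite_K unfolding K_def by (intro Ncount_UN_le[OF bounded]) auto
  also have "\<dots> \<le> (\<Sum>k\<in>K. ?sup)"
    using cSUP_upper[OF rep bdd] by (rule sum_mono)
  finally have "Ncount U f L \<epsilon> t \<le> card K * ?sup"
    by simp
  then show ?thesis
    unfolding K_def by (simp only: of_nat_mult[symmetric] of_nat_le_iff)
qed

lemma eventually_enlarged_radius_power_lt:
  fixes r \<epsilon> a :: real
  assumes "0 < r" and "0 < \<epsilon>"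
  shows "\<forall>\<^sub>F t in at_top. (r + a * (\<epsilon> * exp (- t)) powr (1/2)) ^ d < 2 * r ^ d"
proof -
  have "((\<lambda>t. \<epsilon> * exp (- t)) \<longlongrightarrow> 0) at_top"
    using filterlim_compose[OF exp_at_bot filterlim_uminus_at_bot_at_top]
    by (intro tendsto_mult_right_zero)
  then have "((\<lambda>t. (\<epsilon> * exp (- t)) powr (1/2)) \<longlongrightarrow> 0) at_top"
    using assms(2) by (intro tendsto_zero_powrI[where b = "1/2"]) auto
  then have "((\<lambda>t. (r + a * (\<epsilon> * exp (- t)) powr (1/2)) ^ d) \<longlongrightarrow> (r + a * 0) ^ d) at_top"
    by (intro tendsto_intros)
  then show ?thesis
    by (rule order_tendstoD(2)) (use assms(1) in simp)
qed

lemma eventually_card_grid_index_le: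
  fixes c :: "real^'d::finite" and r \<epsilon> :: real
  assumes "0 < r" and "0 < \<epsilon>"
  shows "\<forall>\<^sub>F t in at_top. \<forall>L\<subseteq>cball c r.
    real (card (grid_index ((\<epsilon> * exp (- t)) powr (1/2)) ` L))
      \<le> 2 * (\<epsilon> * exp (- t)) powr (- real CARD('d) / 2) * measure lborel (ball c r)"
  using eventually_enlarged_radius_power_lt[OF assms, of "CARD('d)" "CARD('d)"]
proof eventually_elim
  case (elim t)
  let ?d = "CARD('d)"
  define s where "s = (\<epsilon> * exp (- t)) powr (1/2)"
  have "0 < s"
    using assms(2) by (simp add: s_def)
  show ?case
    unfolding s_def[symmetric]
  proof (intro allI impI)
    fix L assume "L \<subseteq> cball c r"
    have "real (card (grid_index s ` L)) * s ^ ?d \<le> unit_ball_vol ?d * (r + ?d * s) ^ ?d"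
      using card_grid_index_image_le(2)[OF \<open>0 < s\<close> _ \<open>L \<subseteq> cball c r\<close>] assms(1) by simp
    also have "\<dots> \<le> 2 * measure lborel (ball c r)"
      using elim assms(1) by (simp add: content_ball s_def)
    finally show "real (card (grid_index s ` L))
        \<le> 2 * (\<epsilon> * exp (- t)) powr (- real ?d / 2) * measure lborel (ball c r)"
      using assms(2) by (simp add: s_def powr_power powr_minus field_simps)
  qed
qed

theorem lemma5p3:
  fixes U :: "(real^'d) set" and f :: "'m::finite \<Rightarrow> real^'d \<Rightarrow> real"
    and M \<epsilon> r :: real and c :: "real^'d"
  assumes U_open: "open U"
    and f_diff: "\<forall>k. \<forall>x\<in>U. f k differentiable (at x)"
    and df_diff: "\<forall>k j. \<forall>x\<in>U. partial (f k) j differentiable (at x)"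
    and d2f_cont: "\<forall>k i j. continuous_on U (partial (partial (f k) j) i)"
    and M_ge: "M \<ge> 1"
    and df_bound: "\<forall>k j. \<forall>x\<in>U. \<bar>partial (f k) j x\<bar> \<le> M"
    and d2f_bound: "\<forall>k i j. \<forall>x\<in>U. \<bar>partial (partial (f k) j) i x\<bar> \<le> M"
    and eps_pos: "0 < \<epsilon>" and eps_le: "\<epsilon> \<le> 1"
    and r_pos: "0 < r" and B_sub: "ball c r \<subseteq> U"
  shows "\<forall>\<^sub>F t in at_top.
    real (Ncount U f (ball c r - Mset U f \<epsilon> t) \<epsilon> t)
      \<le> 2 * (\<epsilon> * exp (- t)) powr (- real CARD('d) / 2) * measure lborel (ball c r)
          * real (SUP x0 \<in> Mset' U f \<epsilon> t \<inter> ball c r. Ncount U f (Delta_t \<epsilon> t x0 \<inter> ball c r) \<epsilon> t)"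
proof -
  have bounded: "\<exists>B. \<forall>x\<in>ball c r. \<bar>fvec f x i\<bar> \<le> B" for i
    using f_diff df_bound B_sub by (intro fvec_component_bounded_on_ball[where M = M]) auto
  show ?thesis
    using eventually_card_grid_index_le[OF r_pos eps_pos, of c]
  proof eventually_elim
    case (elim t)
    define s where "s = (\<epsilon> * exp (- t)) powr (1/2)"
    define L where "L = ball c r - Mset U f \<epsilon> t"
    let ?sup = "SUP x0 \<in> Mset' U f \<epsilon> t \<inter> ball c r. Ncount U f (Delta_t \<epsilon> t x0 \<inter> ball c r) \<epsilon> t"
    have "0 < s"
      using eps_pos by (simp add: s_def)
    have L_sub: "L \<subseteq> Mset' U f \<epsilon> t \<inter> ball c r"
      using B_sub by (auto simp: L_def Mset'_def)
    then have "L \<subseteq> cball c r"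
      by auto
    have "real (Ncount U f L \<epsilon> t) \<le> real (card (grid_index s ` L)) * real ?sup"
      using card_grid_index_image_le(1)[OF \<open>0 < s\<close> _ \<open>L \<subseteq> cball c r\<close>] r_pos
      by (intro Ncount_le_card_grid_index_mult_SUP[OF bounded \<open>0 < s\<close> _ L_sub]) (auto simp: s_def)
    also have "\<dots> \<le> 2 * (\<epsilon> * exp (- t)) powr (- real CARD('d) / 2) * measure lborel (ball c r) * real ?sup"
      using elim \<open>L \<subseteq> cball c r\<close> by (intro mult_right_mono) (auto simp: s_def)
    finally show ?case
      unfolding L_def .
  qed
qed

end
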